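(* Let $n\ge 2$ be an integer, $p,q\in\mathbb{R}$ with $q>0$, and let $M$ be a real $n\times n$ matrix whose $n^2$ entries are a permutation of the numbers $p, p+q, \dots, p+(n^2-1)q$. Set $$r := \frac pq + \frac{n^2-1}{2},\quad \rho := \frac{n^3+n^2+n+1}{12},\quad \sigma := nq^2\left(r^2 + \frac{n^4-1}{12}\right).$$ Then: if $r^2 < \rho$: $|\det M| \le \sigma^{n/2}$; if $r^2 = \rho$: $|\det M| \le n^n q^n |r| \rho^{\frac{n-1}{2}} = \sigma^{n/2}$; if $r^2 > \rho$: $|\det M| \le n^n q^n |r| \rho^{\frac{n-1}{2}} < \sigma^{n/2}$. *)

theory Defs
  imports "HOL-Analysis.Analysis"
begin

end

theory Submission
  imports Defs
begin

text \<open>Let e be the unit vector with all coordinates equal. Rotating M by an orthogonal matrix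
  whose k-th column is e and applying Hadamard's inequality to the columns of the product bounds
  (det M)^2 by a product of n nonnegative numbers y_j whose sum is the squared Frobenius norm
  n \<sigma>, and where y_k = |M e|^2 \<ge> (e \<bullet> M e)^2 = (n q r)^2 because the entries of M sum to
  n^2 q r. AM-GM over all y_j gives \<sigma>^n. If r^2 \<ge> \<rho>, the constraint on y_k is active: AM-GM over
  the other n - 1 factors, together with the fact that x (T - x)^(n-1) decreases on [T/n, T],
  gives the sharper bound (n q r)^2 (n^2 q^2 \<rho>)^(n-1), which coincides with \<sigma>^n exactly when
  r^2 = \<rho>.\<close>

lemma abs_det_eq_prod_row_norms_orthogonal:
  fixes A :: "real^'n^'n"
  assumes "\<And>i j. i \<noteq> j \<Longrightarrow> orthogonal (row i A) (row j A)"
  shows "\<bar>det A\<bar> = (\<Prod>i\<in>UNIV. norm (row i A))"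
proof -
  have diag: "(A ** transpose A) $ i $ j = (if i = j then norm (row i A)^2 else 0)" for i j
    using assms[of i j]
    by (auto simp: matrix_matrix_mult_def inner_vec_def row_def transpose_def orthogonal_def
        power2_norm_eq_inner mult.commute)
  have "\<bar>det A\<bar>^2 = det (A ** transpose A)"
    by (simp add: det_mul det_transpose power2_eq_square)
  also have "\<dots> = (\<Prod>i\<in>UNIV. norm (row i A))^2"
    by (subst det_diagonal) (auto simp: diag prod_power_distrib)
  finally have "\<bar>det A\<bar>^2 = (\<Prod>i\<in>UNIV. norm (row i A))^2" .
  then show ?thesis
    by (subst (asm) power2_eq_iff_nonneg) (auto simp: prod_nonneg)
qed

lemma det_replace_row_by_orthogonal_part:
  fixes A :: "real^'n^'n"
  assumes "a \<notin> J"
  obtains z where "det (\<chi> k. if k = a then z else row k A) = det A"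
    and "norm z \<le> norm (row a A)" and "\<And>j. j \<in> J \<Longrightarrow> orthogonal z (row j A)"
proof -
  let ?R = "(\<lambda>j. row j A) ` J"
  obtain y z where y: "y \<in> span ?R" and z: "\<And>w. w \<in> span ?R \<Longrightarrow> orthogonal z w"
    and yz: "row a A = y + z"
    using orthogonal_subspace_decomp_exists by blast
  have "?R \<subseteq> {row j A |j. j \<noteq> a}"
    using assms by auto
  then have "y \<in> span {row j A |j. j \<noteq> a}"
    using span_mono y by blast
  then have "-y \<in> vec.span {row j A |j. j \<noteq> a}"
    unfolding span_vec_eq by (rule span_neg)
  moreover have "z = row a A + - y"
    using yz by simp
  ultimately have det_z: "det (\<chi> k. if k = a then z else row k A) = det A"
    by (simp only: det_row_span)
  have "orthogonal y z"
    using z[OF y] by (simp add: orthogonal_commute)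
  then have "norm (row a A)^2 = norm y^2 + norm z^2"
    unfolding yz by (rule norm_add_Pythagorean)
  then have "norm z^2 \<le> norm (row a A)^2"
    by simp
  then have norm_z: "norm z \<le> norm (row a A)"
    by (rule power2_le_imp_le) simp
  have "orthogonal z (row j A)" if "j \<in> J" for j
    using z that by (auto intro: span_base)
  with det_z norm_z show ?thesis
    by (rule that)
qed

lemma abs_det_le_prod_row_norms_partial:
  fixes A :: "real^'n^'n"
  assumes "finite K"
    and "\<And>i j. i \<notin> K \<Longrightarrow> j \<notin> K \<Longrightarrow> i \<noteq> j \<Longrightarrow> orthogonal (row i A) (row j A)"
  shows "\<bar>det A\<bar> \<le> (\<Prod>i\<in>UNIV. norm (row i A))"
  using assms
proof (induction K arbitrary: A rule: finite_induct)
  case empty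
  then have "\<bar>det A\<bar> = (\<Prod>i\<in>UNIV. norm (row i A))"
    by (intro abs_det_eq_prod_row_norms_orthogonal) auto
  then show ?case
    by simp
next
  case (insert a K)
  obtain z where det_eq: "det (\<chi> k. if k = a then z else row k A) = det A"
    and norm_z: "norm z \<le> norm (row a A)"
    and orth_z: "\<And>j. j \<in> - insert a K \<Longrightarrow> orthogonal z (row j A)"
    using det_replace_row_by_orthogonal_part[where a = a and J = "- insert a K" and A = A] by blast
  define A' where "A' = (\<chi> k. if k = a then z else row k A)"
  have row_A': "row k A' = (if k = a then z else row k A)" for k
    by (simp add: A'_def row_def vec_eq_iff)
  have "orthogonal (row i A') (row j A')" if "i \<notin> K" "j \<notin> K" "i \<noteq> j" for i j
  proof -
    consider "i = a" | "j = a" | "i \<noteq> a" "j \<noteq> a"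
      by blast
    then show ?thesis
    proof cases
      case 1
      then show ?thesis
        using that orth_z[of j] by (simp add: row_A')
    next
      case 2
      then show ?thesis
        using that orth_z[of i] by (simp add: row_A' orthogonal_commute)
    next
      case 3
      then show ?thesis
        using that insert.prems by (simp add: row_A')
    qed
  qed
  then have "\<bar>det A'\<bar> \<le> (\<Prod>i\<in>UNIV. norm (row i A'))"
    by (rule insert.IH)
  also have "\<dots> \<le> (\<Prod>i\<in>UNIV. norm (row i A))"
    by (rule prod_mono) (auto simp: row_A' norm_z)
  finally show ?case
    using det_eq by (simp add: A'_def)
qed

theorem hadamard_inequality:
  fixes A :: "real^'n^'n"
  shows "\<bar>det A\<bar> \<le> (\<Prod>i\<in>UNIV. norm (row i A))"
  by (rule abs_det_le_prod_row_norms_partial[of UNIV]) auto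

lemma prod_le_mean_power:
  fixes y :: "'a \<Rightarrow> real"
  assumes "finite S" "S \<noteq> {}" "\<And>i. i \<in> S \<Longrightarrow> y i \<ge> 0"
  shows "(\<Prod>i\<in>S. y i) \<le> ((\<Sum>i\<in>S. y i) / card S)^(card S)"
proof -
  define P where "P = (\<Prod>i\<in>S. y i)"
  have "P \<ge> 0"
    unfolding P_def using assms by (simp add: prod_nonneg)
  have "card S > 0"
    using assms by (simp add: card_gt_0_iff)
  have "P powr (1 / card S) \<le> (\<Sum>i\<in>S. y i / card S)"
    using arith_geom_mean[OF assms] unfolding P_def by simp
  also have "\<dots> = (\<Sum>i\<in>S. y i) / card S"
    by (simp add: sum_divide_distrib)
  finally have mean: "P powr (1 / card S) \<le> (\<Sum>i\<in>S. y i) / card S" .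
  have "P = (P powr (1 / card S))^(card S)"
    using \<open>P \<ge> 0\<close> \<open>card S > 0\<close>
    by (cases "P = 0") (simp_all add: powr_realpow[symmetric] powr_powr)
  also have "\<dots> \<le> ((\<Sum>i\<in>S. y i) / card S)^(card S)"
    by (rule power_mono[OF mean]) simp
  finally show ?thesis
    unfolding P_def .
qed

lemma mult_power_diff_antimono:
  fixes c x T :: real
  assumes "m \<ge> 1" "0 < c" "c \<le> x" "x \<le> T" "T \<le> (real m + 1) * c"
  shows "x * (T - x)^m \<le> c * (T - c)^m"
proof (cases "x = T")
  case True
  then show ?thesis
    using assms by (simp add: zero_power)
next
  case False
  define t s where "t = T - x" and "s = T - c"
  have "t > 0" "t \<le> s" "t \<le> m * c"
    using False assms by (auto simp: t_def s_def algebra_simps)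
  \<comment> \<open>Bernoulli gives s^m \<ge> t^m + m t^(m-1) (s - t), and then m c \<ge> t closes the gap.\<close>
  have "(s - t) / t \<ge> 0"
    using \<open>t > 0\<close> \<open>t \<le> s\<close> by simp
  then have "1 + real m * ((s - t) / t) \<le> (1 + (s - t) / t)^m"
    by (intro Bernoulli_inequality) linarith
  also have "1 + (s - t) / t = s / t"
    using \<open>t > 0\<close> by (simp add: field_simps)
  finally have "t^m + t^m * (s - t) * m / t \<le> s^m"
    using \<open>t > 0\<close> by (simp add: power_divide field_simps)
  then have bernoulli: "c * (t^m + t^m * (s - t) * m / t) \<le> c * s^m"
    using \<open>c > 0\<close> by (simp add: mult_left_mono)
  have "x * t^m = c * t^m + t^m * (s - t)"
    by (simp add: t_def s_def algebra_simps)
  also have "\<dots> \<le> c * (t^m + t^m * (s - t) * m / t)"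
  proof -
    have "t^m * (s - t) * t \<le> t^m * (s - t) * (m * c)"
      using \<open>t > 0\<close> \<open>t \<le> s\<close> \<open>t \<le> m * c\<close> by (intro mult_left_mono) auto
    then show ?thesis
      using \<open>t > 0\<close> by (simp add: field_simps)
  qed
  finally show ?thesis
    using bernoulli by (simp add: t_def s_def)
qed

lemma amgm_one_vs_rest_strict:
  fixes t \<rho> :: real
  assumes "N \<ge> 2" "0 < \<rho>" "\<rho> < t"
  shows "real N^N * t * \<rho>^(N - 1) < (t + (real N - 1) * \<rho>)^N"
proof -
  define e where "e = (t - \<rho>) / (N * \<rho>)"
  have "e > 0"
    using assms by (simp add: e_def)
  have t_eq: "t = \<rho> * (1 + N * e)"
    using assms by (simp add: e_def field_simps)
  have mean_eq: "t + (real N - 1) * \<rho> = N * \<rho> * (1 + e)"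
    using assms by (simp add: e_def field_simps)
  have \<rho>_pow: "\<rho>^N = \<rho> * \<rho>^(N - 1)"
    using assms by (simp flip: power_Suc)
  have "1 + real (N - 1) * e \<le> (1 + e)^(N - 1)"
    using \<open>e > 0\<close> by (intro Bernoulli_inequality) simp
  then have "(1 + e) * (1 + real (N - 1) * e) \<le> (1 + e) * (1 + e)^(N - 1)"
    using \<open>e > 0\<close> by (intro mult_left_mono) auto
  also have "\<dots> = (1 + e)^N"
    using assms by (simp flip: power_Suc)
  finally have "(1 + e) * (1 + real (N - 1) * e) \<le> (1 + e)^N" .
  moreover have "1 + N * e < (1 + e) * (1 + real (N - 1) * e)"
    using assms \<open>e > 0\<close> by (simp add: of_nat_diff algebra_simps)
  ultimately have "1 + N * e < (1 + e)^N"
    by linarith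
  have "real N^N * t * \<rho>^(N - 1) = (N * \<rho>)^N * (1 + N * e)"
    by (subst t_eq) (simp add: \<rho>_pow power_mult_distrib)
  also have "\<dots> < (N * \<rho>)^N * (1 + e)^N"
    using \<open>1 + N * e < (1 + e)^N\<close> assms by simp
  also have "\<dots> = (t + (real N - 1) * \<rho>)^N"
    by (simp add: mean_eq power_mult_distrib)
  finally show ?thesis .
qed

lemma prod_le_with_one_large_factor:
  fixes y :: "'a \<Rightarrow> real" and c :: real
  assumes "finite I" "k \<in> I" "card I \<ge> 2" "\<And>j. j \<in> I \<Longrightarrow> y j \<ge> 0"
    and "0 < c" "c \<le> y k" "(\<Sum>j\<in>I. y j) \<le> card I * c"
  shows "(\<Prod>j\<in>I. y j) \<le> c * (((\<Sum>j\<in>I. y j) - c) / (real (card I) - 1))^(card I - 1)"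
proof -
  define T m where "T = (\<Sum>j\<in>I. y j)" and "m = card I - 1"
  have "m \<ge> 1" "card (I - {k}) = m"
    using assms by (auto simp: m_def)
  then have "I - {k} \<noteq> {}"
    by (metis card.empty not_one_le_zero)
  have rest: "(\<Sum>j\<in>I - {k}. y j) = T - y k"
    using assms by (simp add: T_def sum_diff1)
  have "y k \<le> T"
    using rest assms sum_nonneg[of "I - {k}" y] by simp
  have "(\<Prod>j\<in>I. y j) = y k * (\<Prod>j\<in>I - {k}. y j)"
    using assms by (simp add: prod.remove)
  also have "\<dots> \<le> y k * ((T - y k) / m)^m"
  proof (rule mult_left_mono)
    show "(\<Prod>j\<in>I - {k}. y j) \<le> ((T - y k) / m)^m"
      using prod_le_mean_power[of "I - {k}" y] assms(1,4) rest \<open>card (I - {k}) = m\<close> \<open>I - {k} \<noteq> {}\<close>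
      by simp
  qed (use assms in auto)
  also have "\<dots> = y k * (T - y k)^m / m^m"
    by (simp add: power_divide)
  also have "\<dots> \<le> c * (T - c)^m / m^m"
  proof (rule divide_right_mono)
    have "T \<le> (real m + 1) * c"
      using assms(3,7) by (simp add: T_def m_def of_nat_diff)
    then show "y k * (T - y k)^m \<le> c * (T - c)^m"
      using \<open>m \<ge> 1\<close> assms(5,6) \<open>y k \<le> T\<close> by (intro mult_power_diff_antimono)
  qed simp
  also have "\<dots> = c * ((T - c) / (real (card I) - 1))^(card I - 1)"
    using assms by (simp add: m_def power_divide of_nat_diff)
  finally show ?thesis
    unfolding T_def .
qed

lemma norm_power2_eq_sum_components: "norm (x :: real^'n)^2 = (\<Sum>i\<in>UNIV. (x $ i)^2)"
  by (simp add: norm_vec_def L2_set_def sum_nonneg)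

lemma column_matrix_mult: "column j (M ** A) = M *v column j (A :: real^'n^'n)"
  by (simp add: vec_eq_iff column_def matrix_matrix_mult_def matrix_vector_mult_def)

lemma row_matrix_mult: "row i (M ** A) = transpose A *v row i (M :: real^'n^'n)"
  by (simp add: vec_eq_iff row_def transpose_def matrix_matrix_mult_def matrix_vector_mult_def
      mult.commute)

lemma norm_orthogonal_matrix_mult:
  "orthogonal_matrix (Q :: real^'n^'n) \<Longrightarrow> norm (Q *v x) = norm x"
  using orthogonal_transformation_matrix[of "(*v) Q"] orthogonal_transformation_norm
  by (simp add: matrix_of_matrix_vector_mul)

lemma abs_det_le_mean_row_norm_power:
  fixes M :: "real^'n^'n"
  shows "\<bar>det M\<bar>^2 \<le> ((\<Sum>i\<in>UNIV. norm (row i M)^2) / CARD('n))^CARD('n)"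
proof -
  have "\<bar>det M\<bar>^2 \<le> (\<Prod>i\<in>UNIV. norm (row i M))^2"
    using hadamard_inequality by (rule power_mono) simp
  also have "\<dots> = (\<Prod>i\<in>UNIV. norm (row i M)^2)"
    by (simp add: prod_power_distrib)
  also have "\<dots> \<le> ((\<Sum>i\<in>UNIV. norm (row i M)^2) / CARD('n))^CARD('n)"
    by (rule prod_le_mean_power) auto
  finally show ?thesis .
qed

lemma abs_det_sq_le_prod_rotated_column_norms:
  fixes M :: "real^'n^'n" and e :: "real^'n"
  assumes "norm e = 1"
  obtains y :: "'n \<Rightarrow> real" and k where "\<And>j. y j \<ge> 0"
    and "\<bar>det M\<bar>^2 \<le> (\<Prod>j\<in>UNIV. y j)"
    and "(\<Sum>j\<in>UNIV. y j) = (\<Sum>i\<in>UNIV. norm (row i M)^2)"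
    and "y k = norm (M *v e)^2"
proof -
  obtain k :: 'n where True
    by simp
  obtain A where A: "orthogonal_matrix A" and "A *v axis k 1 = e"
    using orthogonal_matrix_exists_basis[OF assms] by blast
  then have "column k A = e"
    by (metis matrix_vector_mult_basis)
  define y where "y j = norm (column j (M ** A))^2" for j
  have "\<bar>det M\<bar> = \<bar>det (transpose (M ** A))\<bar>"
    using det_orthogonal_matrix[OF A] by (auto simp: det_transpose det_mul abs_mult)
  also have "\<dots> \<le> (\<Prod>j\<in>UNIV. norm (column j (M ** A)))"
    using hadamard_inequality[of "transpose (M ** A)"] by (simp add: row_transpose)
  finally have "\<bar>det M\<bar>^2 \<le> (\<Prod>j\<in>UNIV. norm (column j (M ** A)))^2"
    by (rule power_mono) simp
  then have "\<bar>det M\<bar>^2 \<le> (\<Prod>j\<in>UNIV. y j)"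
    by (simp add: y_def prod_power_distrib)
  moreover have "(\<Sum>j\<in>UNIV. y j) = (\<Sum>i\<in>UNIV. norm (row i M)^2)"
  proof -
    have "(\<Sum>j\<in>UNIV. y j) = (\<Sum>j\<in>UNIV. \<Sum>i\<in>UNIV. ((M ** A) $ i $ j)^2)"
      by (simp add: y_def norm_power2_eq_sum_components column_def)
    also have "\<dots> = (\<Sum>i\<in>UNIV. norm (row i (M ** A))^2)"
      by (subst sum.swap) (simp add: norm_power2_eq_sum_components row_def)
    also have "\<dots> = (\<Sum>i\<in>UNIV. norm (row i M)^2)"
      using A by (simp only: row_matrix_mult norm_orthogonal_matrix_mult orthogonal_matrix_transpose)
    finally show ?thesis .
  qed
  moreover have "y k = norm (M *v e)^2"
    by (simp add: y_def column_matrix_mult \<open>column k A = e\<close>)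
  ultimately show ?thesis
    using that[of y k] by (simp add: y_def)
qed

lemma entry_sum_le_norm_mult_ones:
  fixes M :: "real^'n^'n"
  defines "e \<equiv> \<chi> i::'n. 1 / sqrt CARD('n)"
  shows "norm e = 1"
    and "\<bar>\<Sum>i\<in>UNIV. \<Sum>j\<in>UNIV. M $ i $ j\<bar> / CARD('n) \<le> norm (M *v e)"
proof -
  have "norm e^2 = 1"
    by (simp add: norm_power2_eq_sum_components e_def power_divide)
  then show "norm e = 1"
    using norm_ge_zero[of e] by (auto simp: power2_eq_1_iff)
  have "e \<bullet> (M *v e) = (\<Sum>i\<in>UNIV. \<Sum>j\<in>UNIV. M $ i $ j * (1 / sqrt CARD('n) * (1 / sqrt CARD('n))))"
    by (simp add: e_def inner_vec_def matrix_vector_mult_def sum_distrib_left sum_distrib_right mult_ac)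
  also have "\<dots> = (\<Sum>i\<in>UNIV. \<Sum>j\<in>UNIV. M $ i $ j) / CARD('n)"
    by (simp add: sum_divide_distrib)
  finally have "\<bar>\<Sum>i\<in>UNIV. \<Sum>j\<in>UNIV. M $ i $ j\<bar> / CARD('n) = \<bar>e \<bullet> (M *v e)\<bar>"
    by simp
  also have "\<dots> \<le> norm e * norm (M *v e)"
    by (rule Cauchy_Schwarz_ineq2)
  finally show "\<bar>\<Sum>i\<in>UNIV. \<Sum>j\<in>UNIV. M $ i $ j\<bar> / CARD('n) \<le> norm (M *v e)"
    using \<open>norm e = 1\<close> by simp
qed

lemma abs_det_sq_le_by_entry_sum:
  fixes M :: "real^'n^'n"
  defines "N \<equiv> CARD('n)"
  defines "s \<equiv> (\<Sum>i\<in>UNIV. \<Sum>j\<in>UNIV. M $ i $ j) / N"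
    and "F \<equiv> \<Sum>i\<in>UNIV. norm (row i M)^2"
  assumes "N \<ge> 2" "s \<noteq> 0" "F \<le> N * s^2"
  shows "\<bar>det M\<bar>^2 \<le> s^2 * ((F - s^2) / (real N - 1))^(N - 1)"
proof -
  define e where "e = (\<chi> i::'n. 1 / sqrt CARD('n))"
  have "norm e = 1" "\<bar>s\<bar> \<le> norm (M *v e)"
    using entry_sum_le_norm_mult_ones(1) entry_sum_le_norm_mult_ones(2)[of M]
    by (simp_all add: e_def s_def N_def)
  obtain y :: "'n \<Rightarrow> real" and k where y: "\<And>j. y j \<ge> 0" "\<bar>det M\<bar>^2 \<le> (\<Prod>j\<in>UNIV. y j)"
    "(\<Sum>j\<in>UNIV. y j) = F" "y k = norm (M *v e)^2"
    using abs_det_sq_le_prod_rotated_column_norms[OF \<open>norm e = 1\<close>, where M = M]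
    unfolding F_def by blast
  have "s^2 \<le> y k"
    using \<open>\<bar>s\<bar> \<le> norm (M *v e)\<close> y(4) by (metis abs_ge_zero power2_abs power_mono)
  have "(\<Prod>j\<in>UNIV. y j) \<le> s^2 * (((\<Sum>j\<in>UNIV. y j) - s^2) / (real (card (UNIV :: 'n set)) - 1))^(card (UNIV :: 'n set) - 1)"
    using assms(4-6) y(1,3) \<open>s^2 \<le> y k\<close>
    by (intro prod_le_with_one_large_factor) (auto simp: N_def)
  with y(2,3) show ?thesis
    by (simp add: N_def)
qed

lemma sum_arith_progression:
  "(\<Sum>k<m. a + real k * d) = m * (a + (real m - 1) / 2 * d)"
  by (induction m) (auto simp: field_simps)

lemma sum_arith_progression_power2:
  "(\<Sum>k<m. (a + real k * d)^2) = m * ((a + (real m - 1) / 2 * d)^2 + d^2 * (real m^2 - 1) / 12)"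
  by (induction m) (auto simp: field_simps power2_eq_square)

lemma sum_entries_progression_matrix:
  fixes M :: "'a^'n^'n" and g :: "'a \<Rightarrow> real"
  assumes "bij_betw f (UNIV :: ('n \<times> 'n) set) {0..<CARD('n)^2}"
    and "\<And>i j. M $ i $ j = h (f (i, j))"
  shows "(\<Sum>i\<in>UNIV. \<Sum>j\<in>UNIV. g (M $ i $ j)) = (\<Sum>k<CARD('n)^2. g (h k))"
proof -
  have "(\<Sum>i\<in>UNIV. \<Sum>j\<in>UNIV. g (M $ i $ j)) = (\<Sum>x\<in>UNIV. g (h (f x)))"
    unfolding sum.cartesian_product UNIV_Times_UNIV by (simp add: assms(2) case_prod_beta)
  also have "\<dots> = (\<Sum>k<CARD('n)^2. g (h k))"
    using sum.reindex_bij_betw[OF assms(1), of "\<lambda>k. g (h k)"] by (simp add: lessThan_atLeast0)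
  finally show ?thesis .
qed

lemma progression_matrix_sums:
  fixes M :: "real^'n^'n" and p q :: real
  defines "n \<equiv> real CARD('n)"
  defines "\<mu> \<equiv> p + (n^2 - 1) / 2 * q"
  assumes "bij_betw f (UNIV :: ('n \<times> 'n) set) {0..<CARD('n)^2}"
    and "\<And>i j. M $ i $ j = p + real (f (i, j)) * q"
  shows "(\<Sum>i\<in>UNIV. \<Sum>j\<in>UNIV. M $ i $ j) = n^2 * \<mu>"
    and "(\<Sum>i\<in>UNIV. norm (row i M)^2) = n^2 * (\<mu>^2 + q^2 * (n^4 - 1) / 12)"
proof -
  have reindex: "(\<Sum>i\<in>UNIV. \<Sum>j\<in>UNIV. g (M $ i $ j)) = (\<Sum>k<CARD('n)^2. g (p + real k * q))"
    for g :: "real \<Rightarrow> real"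
    using assms(3,4) by (rule sum_entries_progression_matrix)
  show "(\<Sum>i\<in>UNIV. \<Sum>j\<in>UNIV. M $ i $ j) = n^2 * \<mu>"
    using reindex[of "\<lambda>x. x"] by (simp add: sum_arith_progression n_def \<mu>_def)
  have "(\<Sum>i\<in>UNIV. norm (row i M)^2) = (\<Sum>i\<in>UNIV. \<Sum>j\<in>UNIV. (M $ i $ j)^2)"
    by (simp add: norm_power2_eq_sum_components row_def)
  also have "\<dots> = n^2 * (\<mu>^2 + q^2 * (n^4 - 1) / 12)"
    using reindex[of "\<lambda>x. x^2"]
    by (simp add: sum_arith_progression_power2 n_def \<mu>_def flip: power_mult)
  finally show "(\<Sum>i\<in>UNIV. norm (row i M)^2) = n^2 * (\<mu>^2 + q^2 * (n^4 - 1) / 12)" .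
qed

lemma powr_half_power2: "0 < x \<Longrightarrow> (x powr (real m / 2))^2 = x^m"
  by (simp add: power2_eq_square powr_add[symmetric] powr_realpow)

lemma entry_sum_bound_vs_frobenius_bound:
  fixes q r \<rho> :: real and N :: nat
  defines "n \<equiv> real N"
  defines "B \<equiv> n^N * q^N * \<bar>r\<bar> * \<rho> powr ((n - 1) / 2)"
    and "\<sigma> \<equiv> n * q^2 * (r^2 + (n - 1) * \<rho>)"
  assumes "N \<ge> 2" "q > 0" "\<rho> > 0" "\<rho> \<le> r^2"
  shows "B^2 = (n * q * r)^2 * (n^2 * q^2 * \<rho>)^(N - 1)"
    and "r^2 = \<rho> \<Longrightarrow> B = \<sigma> powr (n / 2)"
    and "\<rho> < r^2 \<Longrightarrow> B < \<sigma> powr (n / 2)"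
proof -
  have "B \<ge> 0"
    using assms by (simp add: B_def n_def)
  have "\<sigma> > 0"
    using assms by (auto simp: \<sigma>_def n_def intro!: mult_pos_pos add_pos_nonneg)
  have "(\<rho> powr ((n - 1) / 2))^2 = \<rho>^(N - 1)"
    using powr_half_power2[OF \<open>\<rho> > 0\<close>, of "N - 1"] assms by (simp add: n_def of_nat_diff)
  then have B2: "B^2 = n^N * (q^2)^N * (n^N * r^2 * \<rho>^(N - 1))"
    by (simp add: B_def power_mult_distrib power_mult power2_eq_square mult_ac)
  have \<rho>_pow: "\<rho>^N = \<rho> * \<rho>^(N - 1)" "n^N = n * n^(N - 1)" "(q^2)^N = q^2 * (q^2)^(N - 1)"
    using assms by (simp_all flip: power_Suc)
  show "B^2 = (n * q * r)^2 * (n^2 * q^2 * \<rho>)^(N - 1)"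
    unfolding B2 \<rho>_pow by (simp add: power_mult_distrib power2_eq_square mult_ac)
  have \<sigma>2: "(\<sigma> powr (n / 2))^2 = n^N * (q^2)^N * (r^2 + (n - 1) * \<rho>)^N"
    using powr_half_power2[OF \<open>\<sigma> > 0\<close>, of N]
    by (simp add: n_def \<sigma>_def power_mult_distrib)
  show "B = \<sigma> powr (n / 2)" if "r^2 = \<rho>"
  proof -
    have "B^2 = (\<sigma> powr (n / 2))^2"
      unfolding B2 \<sigma>2 that by (simp add: \<rho>_pow power_mult_distrib algebra_simps)
    then show ?thesis
      using \<open>B \<ge> 0\<close> by (simp add: power2_eq_iff_nonneg)
  qed
  show "B < \<sigma> powr (n / 2)" if "\<rho> < r^2"
  proof -
    have "n^N * r^2 * \<rho>^(N - 1) < (r^2 + (n - 1) * \<rho>)^N"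
      using amgm_one_vs_rest_strict[of N \<rho> "r^2"] assms that by (simp add: n_def)
    then have "B^2 < (\<sigma> powr (n / 2))^2"
      unfolding B2 \<sigma>2 using assms by (simp add: n_def)
    then show ?thesis
      by (rule power2_less_imp_less) simp
  qed
qed

lemma abs_det_le_by_entry_and_row_sums:
  fixes M :: "real^'n^'n" and q r \<rho> :: real
  defines "n \<equiv> real CARD('n)"
  defines "\<sigma> \<equiv> n * q^2 * (r^2 + (n - 1) * \<rho>)"
  assumes "CARD('n) \<ge> 2" "q > 0" "\<rho> > 0"
    and entry_sum: "(\<Sum>i\<in>UNIV. \<Sum>j\<in>UNIV. M $ i $ j) / n = n * q * r"
    and row_sum: "(\<Sum>i\<in>UNIV. norm (row i M)^2) = n * \<sigma>"
  shows "\<bar>det M\<bar> \<le> \<sigma> powr (n / 2)"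
    and "\<rho> \<le> r^2 \<Longrightarrow> \<bar>det M\<bar> \<le> n^CARD('n) * q^CARD('n) * \<bar>r\<bar> * \<rho> powr ((n - 1) / 2)"
proof -
  have "n \<ge> 2"
    using assms by (simp add: n_def)
  show "\<bar>det M\<bar> \<le> \<sigma> powr (n / 2)"
  proof (rule power2_le_imp_le)
    have "\<sigma> > 0"
      using \<open>n \<ge> 2\<close> assms by (auto simp: \<sigma>_def intro!: mult_pos_pos add_nonneg_pos)
    then show "\<bar>det M\<bar>^2 \<le> (\<sigma> powr (n / 2))^2"
      using abs_det_le_mean_row_norm_power[of M] \<open>n \<ge> 2\<close>
      by (simp add: row_sum powr_half_power2 n_def)
  qed simp
  assume "\<rho> \<le> r^2"
  show "\<bar>det M\<bar> \<le> n^CARD('n) * q^CARD('n) * \<bar>r\<bar> * \<rho> powr ((n - 1) / 2)"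
  proof (rule power2_le_imp_le)
    have "r \<noteq> 0"
      using \<open>\<rho> \<le> r^2\<close> \<open>\<rho> > 0\<close> by auto
    have "n^2 * q^2 * (r^2 + (n - 1) * \<rho>) \<le> n^2 * q^2 * (r^2 + (n - 1) * r^2)"
      using \<open>\<rho> \<le> r^2\<close> \<open>n \<ge> 2\<close> by (intro mult_left_mono add_left_mono) auto
    then have "n * \<sigma> \<le> n * (n * q * r)^2"
      by (simp add: \<sigma>_def power2_eq_square algebra_simps)
    moreover have "(n * \<sigma> - (n * q * r)^2) / (n - 1) = n^2 * q^2 * \<rho>"
      using \<open>n \<ge> 2\<close> by (simp add: \<sigma>_def field_simps power2_eq_square)
    ultimately have "\<bar>det M\<bar>^2 \<le> (n * q * r)^2 * (n^2 * q^2 * \<rho>)^(CARD('n) - 1)"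
      using abs_det_sq_le_by_entry_sum[of M] assms(3,4) \<open>r \<noteq> 0\<close> \<open>n \<ge> 2\<close>
        entry_sum[unfolded n_def] row_sum[unfolded n_def]
      by (simp add: n_def)
    then show "\<bar>det M\<bar>^2 \<le> (n^CARD('n) * q^CARD('n) * \<bar>r\<bar> * \<rho> powr ((n - 1) / 2))^2"
      using entry_sum_bound_vs_frobenius_bound(1)[where N = "CARD('n)" and q = q and r = r and \<rho> = \<rho>]
        assms(3-5) \<open>\<rho> \<le> r^2\<close>
      by (simp add: n_def)
  qed (use assms in \<open>simp add: n_def\<close>)
qed

theorem mainTheorem7:
  fixes M :: "real ^ 'n ^ 'n" and p q :: real
  assumes n2: "CARD('n) \<ge> 2"
    and qpos: "q > 0"
    and perm: "\<exists>f. bij_betw f (UNIV :: ('n \<times> 'n) set) {0..<CARD('n)^2}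
                    \<and> (\<forall>i j. M $ i $ j = p + real (f (i, j)) * q)"
  defines "n \<equiv> real CARD('n)"
  defines "r \<equiv> p / q + (n^2 - 1) / 2"
    and "\<rho> \<equiv> (n^3 + n^2 + n + 1) / 12"
  defines "\<sigma> \<equiv> n * q^2 * (r^2 + (n^4 - 1) / 12)"
  shows "(r^2 < \<rho> \<longrightarrow> \<bar>det M\<bar> \<le> \<sigma> powr (n / 2))
       \<and> (r^2 = \<rho> \<longrightarrow> \<bar>det M\<bar> \<le> n^CARD('n) * q^CARD('n) * \<bar>r\<bar> * \<rho> powr ((n - 1) / 2)
                     \<and> n^CARD('n) * q^CARD('n) * \<bar>r\<bar> * \<rho> powr ((n - 1) / 2) = \<sigma> powr (n / 2))
       \<and> (r^2 > \<rho> \<longrightarrow> \<bar>det M\<bar> \<le> n^CARD('n) * q^CARD('n) * \<bar>r\<bar> * \<rho> powr ((n - 1) / 2)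
                     \<and> n^CARD('n) * q^CARD('n) * \<bar>r\<bar> * \<rho> powr ((n - 1) / 2) < \<sigma> powr (n / 2))"
proof -
  obtain f where "bij_betw f (UNIV :: ('n \<times> 'n) set) {0..<CARD('n)^2}"
    and "\<And>i j. M $ i $ j = p + real (f (i, j)) * q"
    using perm by blast
  moreover have "p + (n^2 - 1) / 2 * q = q * r"
    using qpos by (simp add: r_def field_simps)
  ultimately have sums: "(\<Sum>i\<in>UNIV. \<Sum>j\<in>UNIV. M $ i $ j) = n^2 * (q * r)"
    "(\<Sum>i\<in>UNIV. norm (row i M)^2) = n^2 * ((q * r)^2 + q^2 * (n^4 - 1) / 12)"
    using progression_matrix_sums[where f = f and M = M and p = p and q = q] by (simp_all add: n_def)
  have quartic: "(n^4 - 1) / 12 = (n - 1) * \<rho>"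
    by (simp add: \<rho>_def field_simps eval_nat_numeral)
  then have \<sigma>_eq: "\<sigma> = n * q^2 * (r^2 + (n - 1) * \<rho>)"
    by (simp add: \<sigma>_def)
  have "q^2 * (n^4 - 1) / 12 = q^2 * ((n - 1) * \<rho>)"
    using quartic by simp
  then have "(\<Sum>i\<in>UNIV. norm (row i M)^2) = n * (n * q^2 * (r^2 + (n - 1) * \<rho>))"
    unfolding sums(2) by (simp only:) (simp add: power2_eq_square algebra_simps)
  moreover have "(\<Sum>i\<in>UNIV. \<Sum>j\<in>UNIV. M $ i $ j) / n = n * q * r"
    using sums(1) n2 by (simp add: n_def power2_eq_square)
  moreover have "\<rho> > 0"
    by (simp add: \<rho>_def n_def add_pos_pos)
  ultimately show ?thesis
    using abs_det_le_by_entry_and_row_sums[where M = M and q = q and r = r and \<rho> = \<rho>]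
      entry_sum_bound_vs_frobenius_bound(2,3)[where N = "CARD('n)" and q = q and r = r and \<rho> = \<rho>]
      n2 qpos
    unfolding \<sigma>_eq n_def by auto
qed

end
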